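(* Let $K$ be a unital commutative ring, let $A$ be a $K$-algebra, and let $L\subseteq A$ be a Lie ideal such that $[A,L^2]\subseteq L$. Then \[ A[L,L^2]A\subseteq A[L,L^2]\subseteq L^2. \] Moreover, if $L_0\subseteq L$ is a subset and $m,n\in\mathbb{N}$ satisfy $[A,L_0]_1\subseteq\Sigma^nL_0$ and $[L_0^{\cdot 2},A]_1\subseteq\Sigma^mL_0$, then \[ A\cdot[L_0,L_0^{\cdot 2}]_1\subseteq \Sigma^{2n+m}L_0^{\cdot 2}\quad\text{and}\quad A\cdot[L_0,L_0^{\cdot 2}]_1\cdot A\subseteq \Sigma^{(2n+m)(1+3n)}L_0^{\cdot 2}. \]
   Context: $K$-algebras are associative and not necessarily unital. For $x,y\in A$, $[x,y]=xy-yx$. For subsets $X,Y\subseteq A$: $[X,Y]$ is the additive subgroup generated by all $[x,y]$ ($x\in X,y\in Y$); $XY$ is the additive subgroup generated by all $xy$, $X^2=XX$, and $XYZ=(XY)Z$; $[X,Y]_1=\{[x,y]: x\in X,y\in Y\}$; $X\cdot Y=\{xy:x\in X,y\in Y\}$, $X^{\cdot 2}=X\cdot X$, and $X\cdot Y\cdot Z$ is the set of triple products $xyz$; $\Sigma^n X=\{x_1+\dots+x_n: x_i\in X\}$. A Lie ideal of $A$ is a $K$-linear subspace $L$ with $[A,L]\subseteq L$. *)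

theory Defs
  imports Main "HOL.Modules"
begin

definition k_algebra :: "('k::comm_ring_1 \<Rightarrow> 'a::ring \<Rightarrow> 'a) \<Rightarrow> bool" where
  "k_algebra s \<longleftrightarrow> module s \<and>
     (\<forall>k x y. s k (x * y) = s k x * y \<and> s k (x * y) = x * s k y)"

definition comm :: "'a::ring \<Rightarrow> 'a \<Rightarrow> 'a" where
  "comm x y = x * y - y * x"

inductive_set add_gen :: "'a::ab_group_add set \<Rightarrow> 'a set" for X where
  zero: "0 \<in> add_gen X"
| gen: "x \<in> X \<Longrightarrow> x \<in> add_gen X"
| add: "x \<in> add_gen X \<Longrightarrow> y \<in> add_gen X \<Longrightarrow> x + y \<in> add_gen X"
| neg: "x \<in> add_gen X \<Longrightarrow> - x \<in> add_gen X"

definition set_comm :: "'a::ring set \<Rightarrow> 'a set \<Rightarrow> 'a set" where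
  "set_comm X Y = add_gen {comm x y | x y. x \<in> X \<and> y \<in> Y}"

text \<open>XY: additive subgroup generated by all xy; X^2 = XX, XYZ = (XY)Z.\<close>
definition set_prod :: "'a::ring set \<Rightarrow> 'a set \<Rightarrow> 'a set" where
  "set_prod X Y = add_gen {x * y | x y. x \<in> X \<and> y \<in> Y}"

definition comm1 :: "'a::ring set \<Rightarrow> 'a set \<Rightarrow> 'a set" where
  "comm1 X Y = {comm x y | x y. x \<in> X \<and> y \<in> Y}"

definition dot :: "'a::ring set \<Rightarrow> 'a set \<Rightarrow> 'a set" where
  "dot X Y = {x * y | x y. x \<in> X \<and> y \<in> Y}"

definition sigma :: "nat \<Rightarrow> 'a::ab_group_add set \<Rightarrow> 'a set" where
  "sigma n X = {sum_list xs | xs. length xs = n \<and> set xs \<subseteq> X}"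

definition lie_ideal :: "('k::comm_ring_1 \<Rightarrow> 'a::ring \<Rightarrow> 'a) \<Rightarrow> 'a set \<Rightarrow> bool" where
  "lie_ideal s L \<longleftrightarrow> module.subspace s L \<and> set_comm UNIV L \<subseteq> L"

end

theory Submission
  imports Defs
begin

text \<open>Everything reduces to two identities in an associative ring:
  \<open>a[x,yz] = [ax,y]z + y[ax,z] + [yz,a]x\<close> and
  \<open>a[x,yz]b = (ab)[x,yz] + a[[x,b],yz] + a[x,y[z,b]] + a[x,[y,b]z]\<close>.
  The first writes \<open>a[x,yz]\<close> as a sum of products of two elements of \<open>L\<close>,
  the second writes \<open>a[x,yz]b\<close> as a sum of elements of the form \<open>a'[x',y'z']\<close>.
  Both sides of the inclusions are additively generated by such elements, because
  products and commutators are biadditive; counting summands with \<open>\<Sigma>\<^sup>n\<close>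
  in place of generated subgroups gives the explicit bounds.\<close>

lemma add_gen_subset_iff: "add_gen X \<subseteq> add_gen Y \<longleftrightarrow> X \<subseteq> add_gen Y"
proof
  assume "X \<subseteq> add_gen Y"
  show "add_gen X \<subseteq> add_gen Y"
  proof
    fix x assume "x \<in> add_gen X"
    then show "x \<in> add_gen Y"
      by induction (use \<open>X \<subseteq> add_gen Y\<close> in \<open>auto intro: add_gen.intros\<close>)
  qed
qed (auto intro: add_gen.gen)

lemma additive_image_add_gen:
  assumes "additive f" and "x \<in> add_gen X"
  shows "f x \<in> add_gen (f ` X)"
  using assms(2)
  by induction (auto intro: add_gen.intros simp: additive.zero[OF assms(1)]
      additive.add[OF assms(1)] additive.minus[OF assms(1)])

lemma add_gen_right_additive:
  assumes "\<And>x. additive (f x)"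
  shows "add_gen {f x y | x y. x \<in> X \<and> y \<in> add_gen Y} = add_gen {f x y | x y. x \<in> X \<and> y \<in> Y}"
    (is "add_gen ?XY' = add_gen ?XY")
proof (rule antisym)
  have "f x y \<in> add_gen ?XY" if "x \<in> X" "y \<in> add_gen Y" for x y
  proof -
    have "f x ` Y \<subseteq> add_gen ?XY" using \<open>x \<in> X\<close> by (blast intro: add_gen.gen)
    then show ?thesis
      using additive_image_add_gen[OF assms that(2)] add_gen_subset_iff by blast
  qed
  then show "add_gen ?XY' \<subseteq> add_gen ?XY" unfolding add_gen_subset_iff by blast
  show "add_gen ?XY \<subseteq> add_gen ?XY'" unfolding add_gen_subset_iff by (blast intro: add_gen.gen)
qed

lemma set_prod_eq_add_gen_dot: "set_prod X Y = add_gen (dot X Y)"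
  by (simp add: set_prod_def dot_def)

lemma set_comm_eq_add_gen_comm1: "set_comm X Y = add_gen (comm1 X Y)"
  by (simp add: set_comm_def comm1_def)

lemma set_prod_add_gen_right: "set_prod X (add_gen Y) = set_prod X Y"
  unfolding set_prod_def by (rule add_gen_right_additive) (unfold_locales, simp add: distrib_left)

lemma set_prod_add_gen_left: "set_prod (add_gen X) Y = set_prod X Y"
proof -
  have swap: "{x * y | x y. x \<in> X' \<and> y \<in> Y} = {(\<lambda>y x. x * y) y x | y x. y \<in> Y \<and> x \<in> X'}" for X'
    by blast
  show ?thesis
    unfolding set_prod_def swap by (rule add_gen_right_additive) (unfold_locales, simp add: distrib_right)
qed

lemma set_comm_add_gen_right: "set_comm X (add_gen Y) = set_comm X Y"
  unfolding set_comm_def by (rule add_gen_right_additive) (unfold_locales, simp add: comm_def algebra_simps)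

lemma set_prod_set_comm_set_prod:
  "set_prod X (set_comm Y (set_prod Z W)) = add_gen (dot X (comm1 Y (dot Z W)))"
  by (metis set_prod_eq_add_gen_dot set_comm_eq_add_gen_comm1 set_comm_add_gen_right set_prod_add_gen_right)

lemma set_prod_set_prod_set_comm_set_prod:
  "set_prod (set_prod X (set_comm Y (set_prod Z W))) V = add_gen (dot (dot X (comm1 Y (dot Z W))) V)"
  by (metis set_prod_set_comm_set_prod set_prod_add_gen_left set_prod_eq_add_gen_dot)

lemma comm_flip: "comm x y = comm (- y) x"
  by (simp add: comm_def)

lemma mult_comm_mult_expand:
  "a * comm x (y * z) = comm (a * x) y * z + y * comm (a * x) z + comm (y * z) a * x"
  by (simp add: comm_def algebra_simps)

lemma mult_comm_mult_mult_expand: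
  "a * comm x (y * z) * b = (a * b) * comm x (y * z) + a * comm (comm x b) (y * z)
     + a * comm x (y * comm z b) + a * comm x (comm y b * z)"
  by (simp add: comm_def algebra_simps)

lemma mem_dot_UNIV_comm1_dot:
  "w \<in> dot UNIV (comm1 X (dot Y Z)) \<longleftrightarrow> (\<exists>a x y z. w = a * comm x (y * z) \<and> x \<in> X \<and> y \<in> Y \<and> z \<in> Z)"
  unfolding dot_def comm1_def by blast

lemma mem_dot_dot_UNIV_comm1_dot_UNIV:
  "w \<in> dot (dot UNIV (comm1 X (dot Y Z))) UNIV
     \<longleftrightarrow> (\<exists>a b x y z. w = a * comm x (y * z) * b \<and> x \<in> X \<and> y \<in> Y \<and> z \<in> Z)"
  unfolding dot_def comm1_def by blast

lemma dot_UNIV_comm1_square_subset: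
  assumes "comm1 UNIV L \<subseteq> L" and "comm1 UNIV (dot L L) \<subseteq> L"
  shows "dot UNIV (comm1 L (dot L L)) \<subseteq> add_gen (dot L L)"
proof (clarsimp simp: mem_dot_UNIV_comm1_dot)
  fix a x y z assume "x \<in> L" "y \<in> L" "z \<in> L"
  then have "comm (a * x) y \<in> L" "comm (a * x) z \<in> L" "comm (y * z) a \<in> L"
    using assms comm_flip[of "y * z" a] unfolding comm1_def dot_def by blast+
  with \<open>x \<in> L\<close> \<open>y \<in> L\<close> \<open>z \<in> L\<close> show "a * comm x (y * z) \<in> add_gen (dot L L)"
    unfolding mult_comm_mult_expand by (intro add_gen.add add_gen.gen) (auto simp: dot_def)
qed

lemma dot_dot_UNIV_comm1_square_UNIV_subset:
  assumes "comm1 UNIV L \<subseteq> L"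
  shows "dot (dot UNIV (comm1 L (dot L L))) UNIV \<subseteq> add_gen (dot UNIV (comm1 L (dot L L)))"
proof (clarsimp simp: mem_dot_dot_UNIV_comm1_dot_UNIV)
  fix a b x y z assume "x \<in> L" "y \<in> L" "z \<in> L"
  then have "comm x b \<in> L" "comm y b \<in> L" "comm z b \<in> L"
    using assms comm_flip[of _ b] unfolding comm1_def by blast+
  with \<open>x \<in> L\<close> \<open>y \<in> L\<close> \<open>z \<in> L\<close>
  show "a * comm x (y * z) * b \<in> add_gen (dot UNIV (comm1 L (dot L L)))"
    unfolding mult_comm_mult_mult_expand
    by (intro add_gen.add add_gen.gen) (auto simp: mem_dot_UNIV_comm1_dot)
qed

lemma sigma_one [simp]: "sigma 1 X = X"
  unfolding sigma_def by (auto simp: length_Suc_conv intro!: exI[of _ "[_]"])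

lemma sigma_add:
  assumes "p \<in> sigma i X" and "q \<in> sigma j X"
  shows "p + q \<in> sigma (i + j) X"
proof -
  obtain xs ys where "p = sum_list xs" "length xs = i" "set xs \<subseteq> X"
    and "q = sum_list ys" "length ys = j" "set ys \<subseteq> X"
    using assms by (auto simp: sigma_def)
  then show ?thesis
    unfolding sigma_def by (intro CollectI exI[of _ "xs @ ys"]) auto
qed

lemma additive_image_sigma:
  assumes "additive f" and "f ` X \<subseteq> sigma j Y" and "p \<in> sigma k X"
  shows "f p \<in> sigma (k * j) Y"
proof -
  have "f (sum_list xs) \<in> sigma (length xs * j) Y" if "set xs \<subseteq> X" for xs
    using that
  proof (induction xs)
    case Nil
    then show ?case by (simp add: additive.zero[OF assms(1)] sigma_def)
  next
    case (Cons x xs)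
    then show ?case
      using assms(2) by (auto simp: additive.add[OF assms(1)] intro!: sigma_add)
  qed
  then show ?thesis
    using assms(3) by (auto simp: sigma_def)
qed

lemma sigma_mult_right:
  assumes "p \<in> sigma k X" and "z \<in> Z"
  shows "p * z \<in> sigma k (dot X Z)"
proof -
  have "additive (\<lambda>x. x * z)" by unfold_locales (simp add: distrib_right)
  moreover have "(\<lambda>x. x * z) ` X \<subseteq> sigma 1 (dot X Z)"
    unfolding sigma_one using assms(2) by (auto simp: dot_def)
  ultimately show ?thesis
    using additive_image_sigma[OF _ _ assms(1)] by (metis mult_1_right)
qed

lemma sigma_mult_left:
  assumes "p \<in> sigma k X" and "z \<in> Z"
  shows "z * p \<in> sigma k (dot Z X)"
proof -
  have "additive (\<lambda>x. z * x)" by unfold_locales (simp add: distrib_left)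
  moreover have "(\<lambda>x. z * x) ` X \<subseteq> sigma 1 (dot Z X)"
    unfolding sigma_one using assms(2) by (auto simp: dot_def)
  ultimately show ?thesis
    using additive_image_sigma[OF _ _ assms(1)] by (metis mult_1_right)
qed

lemma mult_comm_mult_in_sigma:
  assumes "comm1 UNIV L0 \<subseteq> sigma n L0" and "comm1 (dot L0 L0) UNIV \<subseteq> sigma m L0"
    and "x \<in> L0" "y \<in> L0" "z \<in> L0"
  shows "a * comm x (y * z) \<in> sigma (2 * n + m) (dot L0 L0)"
proof -
  have "comm (a * x) y \<in> sigma n L0" "comm (a * x) z \<in> sigma n L0" "comm (y * z) a \<in> sigma m L0"
    using assms unfolding comm1_def dot_def by blast+
  then have "comm (a * x) y * z + y * comm (a * x) z + comm (y * z) a * x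
      \<in> sigma (n + n + m) (dot L0 L0)"
    using assms(3-5) by (intro sigma_add sigma_mult_left sigma_mult_right)
  then show ?thesis
    by (simp add: mult_comm_mult_expand mult_2)
qed

lemma mult_comm_mult_mult_in_sigma:
  assumes "comm1 UNIV L0 \<subseteq> sigma n L0" and "comm1 (dot L0 L0) UNIV \<subseteq> sigma m L0"
    and "x \<in> L0" "y \<in> L0" "z \<in> L0"
  shows "a * comm x (y * z) * b \<in> sigma ((2 * n + m) * (1 + 3 * n)) (dot L0 L0)"
proof -
  let ?S = "sigma (2 * n + m) (dot L0 L0)"
  have S: "a' * comm x' (y' * z') \<in> ?S" if "x' \<in> L0" "y' \<in> L0" "z' \<in> L0" for a' x' y' z'
    using mult_comm_mult_in_sigma[OF assms(1,2) that] .
  have b_comms: "comm x b \<in> sigma n L0" "comm z b \<in> sigma n L0" "comm y b \<in> sigma n L0"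
    using assms(1,3-5) comm_flip[of _ b] unfolding comm1_def by blast+
  have additive: "additive (\<lambda>u. a * comm u (y * z))" "additive (\<lambda>u. a * comm x (y * u))"
    "additive (\<lambda>u. a * comm x (u * z))"
    by (unfold_locales; simp add: comm_def algebra_simps)+
  have "a * comm (comm x b) (y * z) \<in> sigma (n * (2 * n + m)) (dot L0 L0)"
    "a * comm x (y * comm z b) \<in> sigma (n * (2 * n + m)) (dot L0 L0)"
    "a * comm x (comm y b * z) \<in> sigma (n * (2 * n + m)) (dot L0 L0)"
    using additive_image_sigma[OF additive(1) _ b_comms(1)]
      additive_image_sigma[OF additive(2) _ b_comms(2)]
      additive_image_sigma[OF additive(3) _ b_comms(3)]
      S assms(3-5) by (simp_all add: image_subset_iff)
  then have "(a * b) * comm x (y * z) + a * comm (comm x b) (y * z)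
      + a * comm x (y * comm z b) + a * comm x (comm y b * z)
      \<in> sigma ((2 * n + m) + n * (2 * n + m) + n * (2 * n + m) + n * (2 * n + m)) (dot L0 L0)"
    using S assms(3-5) by (intro sigma_add)
  moreover have "(2 * n + m) + n * (2 * n + m) + n * (2 * n + m) + n * (2 * n + m)
      = (2 * n + m) * (1 + 3 * n)"
    by (simp add: algebra_simps)
  ultimately show ?thesis
    by (simp only: mult_comm_mult_mult_expand)
qed

theorem lemma3p3:
  fixes s :: "'k::comm_ring_1 \<Rightarrow> 'a::ring \<Rightarrow> 'a" and L :: "'a set"
  assumes "k_algebra s"
    and "lie_ideal s L"
    and "set_comm UNIV (set_prod L L) \<subseteq> L"
  shows "set_prod (set_prod UNIV (set_comm L (set_prod L L))) UNIV
           \<subseteq> set_prod UNIV (set_comm L (set_prod L L))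
       \<and> set_prod UNIV (set_comm L (set_prod L L)) \<subseteq> set_prod L L
       \<and> (\<forall>(L0 :: 'a set) (m :: nat) (n :: nat).
            L0 \<subseteq> L \<and> comm1 UNIV L0 \<subseteq> sigma n L0 \<and> comm1 (dot L0 L0) UNIV \<subseteq> sigma m L0 \<longrightarrow>
              dot UNIV (comm1 L0 (dot L0 L0)) \<subseteq> sigma (2*n+m) (dot L0 L0)
            \<and> dot (dot UNIV (comm1 L0 (dot L0 L0))) UNIV
                \<subseteq> sigma ((2*n+m)*(1+3*n)) (dot L0 L0))"
proof -
  have lie: "comm1 UNIV L \<subseteq> L"
    using assms(2) by (auto simp: lie_ideal_def set_comm_eq_add_gen_comm1 intro: add_gen.gen)
  have lie_square: "comm1 UNIV (dot L L) \<subseteq> L"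
    using assms(3) unfolding set_comm_eq_add_gen_comm1 set_prod_eq_add_gen_dot comm1_def
    by (blast intro: add_gen.gen)
  have "set_prod (set_prod UNIV (set_comm L (set_prod L L))) UNIV
      \<subseteq> set_prod UNIV (set_comm L (set_prod L L))"
    unfolding set_prod_set_prod_set_comm_set_prod
    unfolding set_prod_set_comm_set_prod add_gen_subset_iff
    using dot_dot_UNIV_comm1_square_UNIV_subset[OF lie] .
  moreover have "set_prod UNIV (set_comm L (set_prod L L)) \<subseteq> set_prod L L"
    unfolding set_prod_set_comm_set_prod
    unfolding set_prod_eq_add_gen_dot[of L] add_gen_subset_iff
    using dot_UNIV_comm1_square_subset[OF lie lie_square] .
  moreover have "dot UNIV (comm1 L0 (dot L0 L0)) \<subseteq> sigma (2*n+m) (dot L0 L0)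
      \<and> dot (dot UNIV (comm1 L0 (dot L0 L0))) UNIV \<subseteq> sigma ((2*n+m)*(1+3*n)) (dot L0 L0)"
    if "comm1 UNIV L0 \<subseteq> sigma n L0" "comm1 (dot L0 L0) UNIV \<subseteq> sigma m L0" for L0 m n
    using mult_comm_mult_in_sigma[OF that] mult_comm_mult_mult_in_sigma[OF that]
    by (auto simp: mem_dot_UNIV_comm1_dot mem_dot_dot_UNIV_comm1_dot_UNIV)
  ultimately show ?thesis
    by blast
qed

end
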